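(* Let $n\geq1$, $\eta=(z,d_0,d_1,\ldots,d_r)\in\Omega$ and $1\leq l<j\leq n$. (a) If $v_{l,\eta}=(p_l,0)$ and $v_{j,\eta}=(p_j,0)$, then $\pi_1(v_{j,\eta}+(n-j)(1,1))\leq\pi_1(v_{l,\eta}+(n-l)(1,1))$, with equality if and only if there exists $1\leq t\leq r$ with $\sum_{i=0}^{t-1}d_i<l<j\leq\sum_{i=0}^td_i$. (b) If $v_{l,\eta}=(0,p_l)$ and $v_{j,\eta}=(0,p_j)$, then $\pi_2(v_{j,\eta}+(n-j)(1,1))\leq\pi_2(v_{l,\eta}+(n-l)(1,1))$, with equality if and only if there exists $1\leq t\leq r$ with $\sum_{i=0}^{t-1}d_i<l<j\leq\sum_{i=0}^td_i$.
   Context: $\pi_i$ is the $i$-th coordinate. $\Omega$ is the set of $\eta=(z,d_0,\ldots,d_r)$ with $z\in\{0,1\}$, $d_0=0$, $d_i\geq1$ ($1\leq i\leq r$), $\sum_{i=0}^rd_i=n$. For $j\in\{1,\ldots,n\}$, $t\in\{1,\ldots,r\}$ is unique with $\sum_{i=0}^{t-1}d_i<j\leq\sum_{i=0}^td_i$, $c=j-\sum_{i=0}^{t-1}d_i$; $v_{j,\eta}=(\sum_{i\text{ odd},i<t}d_i+c,0)$ if $z=1,t$ odd; $(0,\sum_{i\text{ even},i<t}d_i+c)$ if $z=1,t$ even; $(0,\sum_{i\text{ odd},i<t}d_i+c)$ if $z=0,t$ odd; $(\sum_{i\text{ even},i<t}d_i+c,0)$ if $z=0,t$ even. *)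

theory Defs
  imports Main
begin

text \<open>eta = (z, d_0, ..., d_r) is represented as a pair (z, ds) with ds = [d_0, ..., d_r],
  so r = length ds - 1.\<close>

definition Omega :: "nat \<Rightarrow> (nat \<times> nat list) set" where
  "Omega n = {(z, ds). z \<in> {0, 1} \<and> ds \<noteq> [] \<and> ds ! 0 = 0 \<and>
      (\<forall>i \<in> {1..length ds - 1}. ds ! i \<ge> 1) \<and> sum_list ds = n}"

definition psum :: "nat list \<Rightarrow> nat \<Rightarrow> nat" where
  "psum ds t = (\<Sum>i<t. ds ! i)"

definition blk :: "nat list \<Rightarrow> nat \<Rightarrow> nat" where
  "blk ds j = (THE t. 1 \<le> t \<and> t \<le> length ds - 1 \<and> psum ds t < j \<and> j \<le> psum ds (Suc t))"

definition vv :: "nat \<times> nat list \<Rightarrow> nat \<Rightarrow> nat \<times> nat" where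
  "vv eta j = (let z = fst eta; ds = snd eta; t = blk ds j; c = j - psum ds t;
      so = (\<Sum>i | i < t \<and> odd i. ds ! i); se = (\<Sum>i | i < t \<and> even i. ds ! i) in
    if z = 1 then (if odd t then (so + c, 0) else (0, se + c))
    else (if odd t then (0, so + c) else (se + c, 0)))"

end

theory Submission
  imports Defs
begin

text \<open>Let j lie in block t, at offset c = j - psum ds t. Splitting the blocks before t by
  parity, psum ds t = S + O, where S collects the blocks of the same parity as t and O those of
  the opposite parity. The nonzero coordinate of v_j is S + c, so that coordinate plus n - j
  equals n - O. If v_l and v_j lie on the same axis their blocks have the same parity; as l < j,
  either they lie in the same block (and O agrees), or between the two blocks there is a block of
  the opposite parity, which is nonempty, so O grows strictly.\<close>

definition psum_same_parity :: "nat list \<Rightarrow> nat \<Rightarrow> nat" where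
  "psum_same_parity ds t = (\<Sum>i | i < t \<and> odd i = odd t. ds ! i)"

definition psum_opposite_parity :: "nat list \<Rightarrow> nat \<Rightarrow> nat" where
  "psum_opposite_parity ds t = (\<Sum>i | i < t \<and> odd i \<noteq> odd t. ds ! i)"

lemma psum_mono: "a \<le> b \<Longrightarrow> psum ds a \<le> psum ds b"
  unfolding psum_def by (rule sum_mono2) auto

lemma psum_length: "psum ds (length ds) = sum_list ds"
  unfolding psum_def by (simp add: sum_list_sum_nth atLeast0LessThan)

lemma psum_eq_same_plus_opposite_parity:
  "psum ds t = psum_same_parity ds t + psum_opposite_parity ds t"
proof -
  have "{..<t} = {i. i < t \<and> odd i = odd t} \<union> {i. i < t \<and> odd i \<noteq> odd t}" by auto
  then show ?thesis
    unfolding psum_def psum_same_parity_def psum_opposite_parity_def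
    by (simp add: sum.union_disjoint[symmetric] disjoint_iff)
qed

lemma psum_opposite_parity_mono:
  assumes "t1 \<le> t2" "odd t1 = odd t2"
  shows "psum_opposite_parity ds t1 \<le> psum_opposite_parity ds t2"
  unfolding psum_opposite_parity_def by (rule sum_mono2) (use assms in auto)

text \<open>Between two indices of equal parity sits the index Suc t1 of the other parity.\<close>
lemma psum_opposite_parity_strict_mono:
  assumes "t1 < t2" "odd t1 = odd t2" "0 < ds ! Suc t1"
  shows "psum_opposite_parity ds t1 < psum_opposite_parity ds t2"
proof -
  have "Suc t1 < t2" using assms(1,2) by (metis Suc_lessI even_Suc)
  then have sub: "insert (Suc t1) {i. i < t1 \<and> odd i \<noteq> odd t1}
      \<subseteq> {i. i < t2 \<and> odd i \<noteq> odd t2}"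
    using assms(2) by auto
  have "psum_opposite_parity ds t1 < psum_opposite_parity ds t1 + ds ! Suc t1"
    using assms(3) by simp
  also have "\<dots> = (\<Sum>i \<in> insert (Suc t1) {i. i < t1 \<and> odd i \<noteq> odd t1}. ds ! i)"
    unfolding psum_opposite_parity_def by simp
  also have "\<dots> \<le> psum_opposite_parity ds t2"
    unfolding psum_opposite_parity_def by (rule sum_mono2[OF _ sub]) auto
  finally show ?thesis .
qed

lemma ex_crossing_index:
  fixes f :: "nat \<Rightarrow> 'a :: linorder"
  assumes "f a < x" "x \<le> f b" "a \<le> b"
  shows "\<exists>t. a \<le> t \<and> t < b \<and> f t < x \<and> x \<le> f (Suc t)"
  using assms
proof (induction b)
  case 0
  then show ?case by simp
next
  case (Suc b)
  show ?case
  proof (cases "f b < x")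
    case True
    have "a \<noteq> Suc b" using Suc.prems(1,2) by auto
    with True Suc.prems show ?thesis by (intro exI[of _ b]) auto
  next
    case False
    then have "a \<le> b" using Suc.prems le_Suc_eq by auto
    with False Suc.IH Suc.prems(1) show ?thesis by (meson less_Suc_eq not_less)
  qed
qed

lemma block_index_mono:
  assumes "psum ds t < l" "l \<le> j" "j \<le> psum ds (Suc t')"
  shows "t \<le> t'"
proof (rule ccontr)
  assume "\<not> t \<le> t'"
  then have "psum ds (Suc t') \<le> psum ds t" by (intro psum_mono) simp
  with assms show False by simp
qed

lemma blk_spec:
  assumes "(z, ds) \<in> Omega n" "1 \<le> j" "j \<le> n"
  shows "1 \<le> blk ds j \<and> blk ds j \<le> length ds - 1 \<and>
    psum ds (blk ds j) < j \<and> j \<le> psum ds (Suc (blk ds j))"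
proof -
  have "ds \<noteq> []" "ds ! 0 = 0" "sum_list ds = n" using assms(1) unfolding Omega_def by auto
  then have "psum ds 1 < j" "j \<le> psum ds (length ds)" "1 \<le> length ds"
    using assms(2,3) by (simp_all add: psum_length Suc_leI) (simp add: psum_def)
  then obtain t where t: "1 \<le> t" "t < length ds" "psum ds t < j" "j \<le> psum ds (Suc t)"
    using ex_crossing_index[of "psum ds" 1 j "length ds"] by blast
  have "blk ds j = t"
    unfolding blk_def
    by (rule the_equality) (use t block_index_mono[of ds _ j j] in \<open>auto intro: antisym\<close>)
  with t show ?thesis by simp
qed

lemma ex_common_block_iff_blk_eq:
  assumes "(z, ds) \<in> Omega n" "1 \<le> l" "l \<le> j" "j \<le> n"
  shows "(\<exists>t. 1 \<le> t \<and> t \<le> length ds - 1 \<and> psum ds t < l \<and> j \<le> psum ds (Suc t))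
    \<longleftrightarrow> blk ds l = blk ds j"
proof
  assume "\<exists>t. 1 \<le> t \<and> t \<le> length ds - 1 \<and> psum ds t < l \<and> j \<le> psum ds (Suc t)"
  then obtain t where t: "psum ds t < l" "j \<le> psum ds (Suc t)" by blast
  have "blk ds l = t" "blk ds j = t"
    using blk_spec[OF assms(1,2)] blk_spec[OF assms(1)] t assms
      block_index_mono[of ds _ l l] block_index_mono[of ds _ l j] block_index_mono[of ds _ j j]
    by (auto intro: antisym)
  then show "blk ds l = blk ds j" by simp
next
  assume "blk ds l = blk ds j"
  then show "\<exists>t. 1 \<le> t \<and> t \<le> length ds - 1 \<and> psum ds t < l \<and> j \<le> psum ds (Suc t)"
    using blk_spec[OF assms(1,2)] blk_spec[OF assms(1)] assms by (metis order.trans)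
qed

lemma blk_mono:
  assumes "(z, ds) \<in> Omega n" "1 \<le> l" "l \<le> j" "j \<le> n"
  shows "blk ds l \<le> blk ds j"
proof (rule block_index_mono)
  show "psum ds (blk ds l) < l" using blk_spec[OF assms(1,2)] assms(3,4) by simp
  show "j \<le> psum ds (Suc (blk ds j))"
    using blk_spec[OF assms(1) _ assms(4)] assms(2,3) by simp
qed (use assms(3) in simp)

lemma vv_eq_psum_same_parity:
  "vv (z, ds) j = (let t = blk ds j; h = psum_same_parity ds t + (j - psum ds t) in
    if (z = 1) = odd t then (h, 0) else (0, h))"
proof -
  define t where "t = blk ds j"
  have odd: "odd t \<Longrightarrow> {i. i < t \<and> odd i = odd t} = {i. i < t \<and> odd i}"
    and even: "even t \<Longrightarrow> {i. i < t \<and> odd i = odd t} = {i. i < t \<and> even i}" by auto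
  show ?thesis
    unfolding vv_def Let_def psum_same_parity_def
    by (cases "z = 1"; cases "odd t"; simp add: odd even t_def[symmetric])
qed

lemma vv_on_axis:
  assumes "(z, ds) \<in> Omega n" "1 \<le> j" "j \<le> n"
  obtains h where "0 < h" "h + (n - j) + psum_opposite_parity ds (blk ds j) = n"
    "vv (z, ds) j = (if (z = 1) = odd (blk ds j) then (h, 0) else (0, h))"
  using that[of "psum_same_parity ds (blk ds j) + (j - psum ds (blk ds j))"]
    blk_spec[OF assms] psum_eq_same_plus_opposite_parity[of ds "blk ds j"] assms(3)
  by (simp add: vv_eq_psum_same_parity)

lemma psum_opposite_parity_blk_le:
  assumes "(z, ds) \<in> Omega n" "1 \<le> l" "l \<le> j" "j \<le> n" "odd (blk ds l) = odd (blk ds j)"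
  shows "psum_opposite_parity ds (blk ds l) \<le> psum_opposite_parity ds (blk ds j)"
    and "psum_opposite_parity ds (blk ds l) = psum_opposite_parity ds (blk ds j)
      \<longleftrightarrow> blk ds l = blk ds j"
proof -
  have le: "blk ds l \<le> blk ds j" using blk_mono[OF assms(1-4)] .
  then show "psum_opposite_parity ds (blk ds l) \<le> psum_opposite_parity ds (blk ds j)"
    using assms(5) by (rule psum_opposite_parity_mono)
  have strict: "psum_opposite_parity ds (blk ds l) < psum_opposite_parity ds (blk ds j)"
    if "blk ds l \<noteq> blk ds j"
  proof (rule psum_opposite_parity_strict_mono)
    show "blk ds l < blk ds j" using le that by simp
    moreover have "blk ds j \<le> length ds - 1"
      using blk_spec[OF assms(1) _ assms(4)] assms(2,3) by simp
    ultimately have "Suc (blk ds l) \<in> {1..length ds - 1}" by simp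
    then show "0 < ds ! Suc (blk ds l)" using assms(1) unfolding Omega_def by fastforce
  qed (use assms(5) in simp)
  then show "psum_opposite_parity ds (blk ds l) = psum_opposite_parity ds (blk ds j)
      \<longleftrightarrow> blk ds l = blk ds j"
    by (metis less_irrefl)
qed

theorem lemma2p8:
  fixes n l j z :: nat and ds :: "nat list"
  assumes "n \<ge> 1" and "(z, ds) \<in> Omega n" and "1 \<le> l" and "l < j" and "j \<le> n"
  shows "(\<forall>pl pj. vv (z, ds) l = (pl, 0) \<and> vv (z, ds) j = (pj, 0) \<longrightarrow>
            fst (vv (z, ds) j) + (n - j) \<le> fst (vv (z, ds) l) + (n - l) \<and>
            (fst (vv (z, ds) j) + (n - j) = fst (vv (z, ds) l) + (n - l) \<longleftrightarrow>
              (\<exists>t. 1 \<le> t \<and> t \<le> length ds - 1 \<and> psum ds t < l \<and> j \<le> psum ds (Suc t))))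
       \<and> (\<forall>pl pj. vv (z, ds) l = (0, pl) \<and> vv (z, ds) j = (0, pj) \<longrightarrow>
            snd (vv (z, ds) j) + (n - j) \<le> snd (vv (z, ds) l) + (n - l) \<and>
            (snd (vv (z, ds) j) + (n - j) = snd (vv (z, ds) l) + (n - l) \<longleftrightarrow>
              (\<exists>t. 1 \<le> t \<and> t \<le> length ds - 1 \<and> psum ds t < l \<and> j \<le> psum ds (Suc t))))"
proof -
  have l_range: "1 \<le> l" "l \<le> j" "l \<le> n" and j_range: "1 \<le> j" "j \<le> n"
    using assms by auto
  obtain hl where hl: "0 < hl" "hl + (n - l) + psum_opposite_parity ds (blk ds l) = n"
    "vv (z, ds) l = (if (z = 1) = odd (blk ds l) then (hl, 0) else (0, hl))"
    using vv_on_axis[OF assms(2) l_range(1,3)] .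
  obtain hj where hj: "0 < hj" "hj + (n - j) + psum_opposite_parity ds (blk ds j) = n"
    "vv (z, ds) j = (if (z = 1) = odd (blk ds j) then (hj, 0) else (0, hj))"
    using vv_on_axis[OF assms(2) j_range] .
  note compare = psum_opposite_parity_blk_le[OF assms(2) l_range(1,2) j_range(2)]
  note same_block = ex_common_block_iff_blk_eq[OF assms(2) l_range(1,2) j_range(2)]
  show ?thesis
    unfolding same_block using hl hj compare by (auto split: if_splits)
qed

end
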